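(* Let $M\in\mathrm{rep}\,G_{m,n}$ be arbitrary, let $\ast\in\{ss,cc,tot\}$, and let $i,j$ be vertices of $G_{m,n}$ such that there is a path from $i$ to $j$. Then $$\sum_{I\in\mathbb{I}_{m,n}}\tilde d^\ast_M(I)\cdot\operatorname{rank} V_I(i\to j)=\operatorname{rank} M(i\to j).$$
   Context: Fix a field $K$. For integers $m,n\ge1$, $G_{m,n}$ is the equioriented commutative $m\times n$ grid: the quiver with vertex set $\{(i,j):1\le i\le m,\ 1\le j\le n\}$ and arrows $(i,j)\to(i,j+1)$ and $(i,j)\to(i+1,j)$, bound by all commutativity relations; $\mathrm{rep}\,G_{m,n}$ is its category of finite-dimensional representations over $K$ satisfying the relations. For vertices $s,t$ with a path from $s$ to $t$, $M(s\to t)$ is the composite linear map along any such path (identity if $s=t$). An interval of $G_{m,n}$ is a nonempty full subquiver $I$ which is connected (as an undirected graph) and convex (whenever $x,y\in I_0$ and there are paths $x\to z$, $z\to y$ in $G_{m,n}$, then $z\in I_0$); $\mathbb{I}_{m,n}$ is the set of intervals ordered by inclusion of vertex sets. The interval representation $V_I$ has $K$ at vertices of $I$, $0$ elsewhere, identity maps on arrows inside $I$ and zero maps otherwise. Essential vertices: $I^{ss}_0$ is the set of sources and sinks of the quiver $I$; $I^{cc}_0=I_0\cap(\mathrm{pr}_1(I^{ss}_0)\times\mathrm{pr}_2(I^{ss}_0))$ with $\mathrm{pr}_1,\mathrm{pr}_2$ coordinate projections; $I^{tot}_0=I_0$. Let $KG_{m,n}$ be the $K$-linear category whose objects are the vertices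 and whose morphisms are $K$-linear combinations of paths modulo the commutativity relations; representations are $K$-linear functors $KG_{m,n}\to\mathrm{vect}_K$. For $\ast\in\{ss,cc,tot\}$, $\mathcal{C}^\ast_I$ is the full subcategory of $KG_{m,n}$ on $I^\ast_0$, and $M^\ast_I:=M|_{\mathcal{C}^\ast_I}$. The compressed multiplicity $\bar d^\ast_M(I)$ is the multiplicity of the indecomposable $(V_I)^\ast_I$ as a direct summand of $M^\ast_I$. Let $\mu$ be the Möbius function of the finite poset $\mathbb{I}_{m,n}$ ($\mu([I,I])=1$, $\mu([I,J])=-\sum_{I\le L<J}\mu([I,L])$ for $I<J$), and $\tilde d^\ast_M(I):=\sum_{J\ge I}\mu([I,J])\,\bar d^\ast_M(J)$. *)

theory Defs
  imports "Jordan_Normal_Form.DL_Rank"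
begin

type_synonym vertex = "nat \<times> nat"

definition grid_vertices :: "nat \<Rightarrow> nat \<Rightarrow> vertex set" where
  "grid_vertices m n = {(i, j). 1 \<le> i \<and> i \<le> m \<and> 1 \<le> j \<and> j \<le> n}"

definition grid_arrow :: "nat \<Rightarrow> nat \<Rightarrow> vertex \<Rightarrow> vertex \<Rightarrow> bool" where
  "grid_arrow m n x y \<longleftrightarrow> x \<in> grid_vertices m n \<and> y \<in> grid_vertices m n \<and>
     ((fst y = fst x \<and> snd y = snd x + 1) \<or> (fst y = fst x + 1 \<and> snd y = snd x))"

definition grid_path :: "nat \<Rightarrow> nat \<Rightarrow> vertex \<Rightarrow> vertex \<Rightarrow> bool" where
  "grid_path m n x y \<longleftrightarrow> x \<in> grid_vertices m n \<and> (grid_arrow m n)\<^sup>*\<^sup>* x y"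

text \<open>A representation: a dimension at each vertex (the space is K^d), a matrix for each
  horizontal arrow (i,j)->(i,j+1) and each vertical arrow (i,j)->(i+1,j).
  Values outside the grid are irrelevant.\<close>
record 'k grid_rep =
  rdim :: "vertex \<Rightarrow> nat"
  hmap :: "vertex \<Rightarrow> 'k mat"
  vmap :: "vertex \<Rightarrow> 'k mat"

definition is_grid_rep :: "nat \<Rightarrow> nat \<Rightarrow> 'k::field grid_rep \<Rightarrow> bool" where
  "is_grid_rep m n M \<longleftrightarrow>
     (\<forall>i j. 1 \<le> i \<and> i \<le> m \<and> 1 \<le> j \<and> j < n \<longrightarrow>
        hmap M (i, j) \<in> carrier_mat (rdim M (i, j + 1)) (rdim M (i, j))) \<and>
     (\<forall>i j. 1 \<le> i \<and> i < m \<and> 1 \<le> j \<and> j \<le> n \<longrightarrow>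
        vmap M (i, j) \<in> carrier_mat (rdim M (i + 1, j)) (rdim M (i, j))) \<and>
     (\<forall>i j. 1 \<le> i \<and> i < m \<and> 1 \<le> j \<and> j < n \<longrightarrow>
        hmap M (i + 1, j) * vmap M (i, j) = vmap M (i, j + 1) * hmap M (i, j))"

fun hcomp :: "'k::field grid_rep \<Rightarrow> nat \<Rightarrow> nat \<Rightarrow> nat \<Rightarrow> 'k mat" where
  "hcomp M i j 0 = 1\<^sub>m (rdim M (i, j))"
| "hcomp M i j (Suc l) = hmap M (i, j + l) * hcomp M i j l"

fun vcomp :: "'k::field grid_rep \<Rightarrow> nat \<Rightarrow> nat \<Rightarrow> nat \<Rightarrow> 'k mat" where
  "vcomp M i j 0 = 1\<^sub>m (rdim M (i, j))"
| "vcomp M i j (Suc l) = vmap M (i + l, j) * vcomp M i j l"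

text \<open>M(s -> t): composite along the path going first down column snd s, then along
  row fst t (by commutativity, equal to the composite along any path from s to t).\<close>
definition path_map :: "'k::field grid_rep \<Rightarrow> vertex \<Rightarrow> vertex \<Rightarrow> 'k mat" where
  "path_map M s t = hcomp M (fst t) (snd s) (snd t - snd s) * vcomp M (fst s) (snd s) (fst t - fst s)"

definition mat_rank :: "'k::field mat \<Rightarrow> nat" where
  "mat_rank A = vec_space.rank (dim_row A) A"

definition sub_arrow :: "nat \<Rightarrow> nat \<Rightarrow> vertex set \<Rightarrow> vertex \<Rightarrow> vertex \<Rightarrow> bool" where
  "sub_arrow m n I x y \<longleftrightarrow> x \<in> I \<and> y \<in> I \<and> grid_arrow m n x y"

definition is_interval :: "nat \<Rightarrow> nat \<Rightarrow> vertex set \<Rightarrow> bool" where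
  "is_interval m n I \<longleftrightarrow>
     I \<noteq> {} \<and> I \<subseteq> grid_vertices m n \<and>
     (\<forall>x\<in>I. \<forall>y\<in>I. (\<lambda>a b. sub_arrow m n I a b \<or> sub_arrow m n I b a)\<^sup>*\<^sup>* x y) \<and>
     (\<forall>x\<in>I. \<forall>y\<in>I. \<forall>z. grid_path m n x z \<and> grid_path m n z y \<longrightarrow> z \<in> I)"

definition intervals :: "nat \<Rightarrow> nat \<Rightarrow> vertex set set" where
  "intervals m n = {I. is_interval m n I}"

definition interval_rep :: "vertex set \<Rightarrow> 'k::field grid_rep" where
  "interval_rep I = \<lparr> rdim = (\<lambda>x. if x \<in> I then 1 else 0),
     hmap = (\<lambda>(i, j). if (i, j) \<in> I \<and> (i, j + 1) \<in> I then 1\<^sub>m 1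
                      else 0\<^sub>m (if (i, j + 1) \<in> I then 1 else 0) (if (i, j) \<in> I then 1 else 0)),
     vmap = (\<lambda>(i, j). if (i, j) \<in> I \<and> (i + 1, j) \<in> I then 1\<^sub>m 1
                      else 0\<^sub>m (if (i + 1, j) \<in> I then 1 else 0) (if (i, j) \<in> I then 1 else 0)) \<rparr>"

datatype ess_kind = SS | CC | TOT

definition ss_vertices :: "nat \<Rightarrow> nat \<Rightarrow> vertex set \<Rightarrow> vertex set" where
  "ss_vertices m n I = {x \<in> I. (\<not> (\<exists>y. sub_arrow m n I y x)) \<or> (\<not> (\<exists>y. sub_arrow m n I x y))}"

definition ess_vertices :: "nat \<Rightarrow> nat \<Rightarrow> ess_kind \<Rightarrow> vertex set \<Rightarrow> vertex set" where
  "ess_vertices m n k I = (case k of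
      SS \<Rightarrow> ss_vertices m n I
    | CC \<Rightarrow> I \<inter> (fst ` ss_vertices m n I \<times> snd ` ss_vertices m n I)
    | TOT \<Rightarrow> I)"

fun mat_pow_sum :: "nat \<Rightarrow> 'k::field mat \<Rightarrow> 'k mat" where
  "mat_pow_sum 0 A = 0\<^sub>m 0 0"
| "mat_pow_sum (Suc k) A = four_block_mat A (0\<^sub>m (dim_row A) (k * dim_col A))
       (0\<^sub>m (k * dim_row A) (dim_col A)) (mat_pow_sum k A)"

text \<open>The restriction of N to the full subcategory on S, taken k times (N^k), is a direct
  summand of the restriction of M to S: there are morphisms f : N^k -> M and g : M -> N^k
  (natural w.r.t. all morphisms s -> t of the subcategory) with g o f = id.\<close>
definition summand_pow :: "nat \<Rightarrow> nat \<Rightarrow> vertex set \<Rightarrow> nat \<Rightarrow> 'k::field grid_rep \<Rightarrow> 'k grid_rep \<Rightarrow> bool" where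
  "summand_pow m n S k N M \<longleftrightarrow>
     (\<exists>f g. (\<forall>s\<in>S. f s \<in> carrier_mat (rdim M s) (k * rdim N s) \<and>
                    g s \<in> carrier_mat (k * rdim N s) (rdim M s) \<and>
                    g s * f s = 1\<^sub>m (k * rdim N s)) \<and>
            (\<forall>s\<in>S. \<forall>t\<in>S. grid_path m n s t \<longrightarrow>
                    path_map M s t * f s = f t * mat_pow_sum k (path_map N s t) \<and>
                    g t * path_map M s t = mat_pow_sum k (path_map N s t) * g s))"

definition summand_mult :: "nat \<Rightarrow> nat \<Rightarrow> vertex set \<Rightarrow> 'k::field grid_rep \<Rightarrow> 'k grid_rep \<Rightarrow> nat" where
  "summand_mult m n S N M = (GREATEST k. summand_pow m n S k N M)"

definition compressed_mult :: "nat \<Rightarrow> nat \<Rightarrow> ess_kind \<Rightarrow> 'k::field grid_rep \<Rightarrow> vertex set \<Rightarrow> nat" where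
  "compressed_mult m n k M I = summand_mult m n (ess_vertices m n k I) (interval_rep I) M"

function mobius :: "nat \<Rightarrow> nat \<Rightarrow> vertex set \<Rightarrow> vertex set \<Rightarrow> int" where
  "mobius m n I J = (if I = J then 1
     else if I \<subset> J \<and> finite J
       then - (\<Sum>L \<in> {L. is_interval m n L \<and> I \<subseteq> L \<and> L \<subset> J}. mobius m n I L)
     else 0)"
  by auto
termination
  by (relation "measure (\<lambda>(m, n, I, J). card J)") (auto intro: psubset_card_mono)

definition tilde_mult :: "nat \<Rightarrow> nat \<Rightarrow> ess_kind \<Rightarrow> 'k::field grid_rep \<Rightarrow> vertex set \<Rightarrow> int" where
  "tilde_mult m n k M I =
     (\<Sum>J \<in> {J \<in> intervals m n. I \<subseteq> J}. mobius m n I J * int (compressed_mult m n k M J))"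

end

theory Submission
  imports Defs
begin

text \<open>
  For an interval \<open>I\<close> and a path \<open>i \<rightarrow> j\<close>, the map \<open>V\<^sub>I(i \<rightarrow> j)\<close> has rank 1 exactly when \<open>I\<close>
  contains the rectangle \<open>[i, j]\<close> (by convexity) and rank 0 otherwise. So the left-hand side
  is the sum of \<open>d\<^sup>~(I)\<close> over all intervals above \<open>[i, j]\<close>, which by Moebius inversion equals the
  compressed multiplicity of \<open>[i, j]\<close>. Since \<open>i\<close> and \<open>j\<close> are essential vertices of the rectangle and
  every essential vertex \<open>s\<close> lies on a path \<open>i \<rightarrow> s \<rightarrow> j\<close>, this multiplicity is \<open>rank M(i \<rightarrow> j)\<close>:
  a splitting \<open>C M(i \<rightarrow> j) B = 1\<^sub>r\<close> yields \<open>r\<close> copies of \<open>V\<^sub>[\<^sub>i\<^sub>,\<^sub>j\<^sub>]\<close> as a summand, and conversely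
  any \<open>k\<close> copies factor \<open>1\<^sub>k\<close> through \<open>M(i \<rightarrow> j)\<close>.
\<close>

section \<open>Paths and rectangles in the grid\<close>

lemma rtranclp_chain:
  "(\<And>t. t < p \<Longrightarrow> P (f t) (f (Suc t))) \<Longrightarrow> P\<^sup>*\<^sup>* (f 0) (f p)"
  by (induction p) (auto intro: rtranclp.rtrancl_into_rtrancl)

definition rect :: "vertex \<Rightarrow> vertex \<Rightarrow> vertex set" where
  "rect x y = {z. fst x \<le> fst z \<and> fst z \<le> fst y \<and> snd x \<le> snd z \<and> snd z \<le> snd y}"

definition unit_step :: "vertex \<Rightarrow> vertex \<Rightarrow> bool" where
  "unit_step z z' \<longleftrightarrow> (fst z' = fst z \<and> snd z' = Suc (snd z)) \<or> (fst z' = Suc (fst z) \<and> snd z' = snd z)"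

lemma rtranclp_rect_staircase:
  assumes step: "\<And>z z'. z \<in> rect x y \<Longrightarrow> z' \<in> rect x y \<Longrightarrow> unit_step z z' \<Longrightarrow> P z z'"
    and "fst x \<le> fst y" "snd x \<le> snd y"
  shows "P\<^sup>*\<^sup>* x y"
proof -
  obtain a b c d where x: "x = (a, b)" and y: "y = (c, d)" by (cases x, cases y)
  have down: "P\<^sup>*\<^sup>* (a, b) (c, b)"
    using rtranclp_chain[of "c - a" P "\<lambda>t. (a + t, b)"] assms
    by (force simp: x y rect_def unit_step_def intro: step)
  have right: "P\<^sup>*\<^sup>* (c, b) (c, d)"
    using rtranclp_chain[of "d - b" P "\<lambda>t. (c, b + t)"] assms
    by (force simp: x y rect_def unit_step_def intro: step)
  show ?thesis using down right by (simp add: x y)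
qed

lemma grid_path_iff:
  "grid_path m n x y \<longleftrightarrow>
     x \<in> grid_vertices m n \<and> y \<in> grid_vertices m n \<and> fst x \<le> fst y \<and> snd x \<le> snd y"
proof
  assume "grid_path m n x y"
  then have "x \<in> grid_vertices m n" and "(grid_arrow m n)\<^sup>*\<^sup>* x y" by (auto simp: grid_path_def)
  from this(2) show "x \<in> grid_vertices m n \<and> y \<in> grid_vertices m n \<and> fst x \<le> fst y \<and> snd x \<le> snd y"
    by induction (use \<open>x \<in> grid_vertices m n\<close> in \<open>auto simp: grid_arrow_def\<close>)
next
  assume "x \<in> grid_vertices m n \<and> y \<in> grid_vertices m n \<and> fst x \<le> fst y \<and> snd x \<le> snd y"
  then show "grid_path m n x y"
    unfolding grid_path_def
    by (auto intro!: rtranclp_rect_staircase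
             simp: grid_arrow_def rect_def grid_vertices_def unit_step_def)
qed

lemma finite_grid_vertices: "finite (grid_vertices m n)"
  by (rule finite_subset[of _ "{1..m} \<times> {1..n}"]) (auto simp: grid_vertices_def)

lemma finite_interval: "is_interval m n I \<Longrightarrow> finite I"
  using finite_grid_vertices finite_subset unfolding is_interval_def by metis

lemma finite_intervals: "finite (intervals m n)"
  by (rule finite_subset[of _ "Pow (grid_vertices m n)"])
     (auto simp: intervals_def is_interval_def finite_grid_vertices)

lemma rect_subset_interval:
  assumes "is_interval m n I" "x \<in> I" "y \<in> I"
  shows "rect x y \<subseteq> I"
proof
  fix z assume z: "z \<in> rect x y"
  have "x \<in> grid_vertices m n" "y \<in> grid_vertices m n" using assms by (auto simp: is_interval_def)
  with z have "grid_path m n x z" "grid_path m n z y"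
    by (auto simp: grid_path_iff rect_def grid_vertices_def)
  then show "z \<in> I" using assms unfolding is_interval_def by blast
qed

lemma rect_is_interval:
  assumes "grid_path m n x y"
  shows "is_interval m n (rect x y)"
proof -
  let ?R = "rect x y"
  have sub: "?R \<subseteq> grid_vertices m n"
    using assms by (auto simp: grid_path_iff rect_def grid_vertices_def)
  have from_x: "(sub_arrow m n ?R)\<^sup>*\<^sup>* x z" if "z \<in> ?R" for z
    using that sub
    by (intro rtranclp_rect_staircase)
       (auto simp: rect_def sub_arrow_def grid_arrow_def unit_step_def subset_iff)
  let ?E = "\<lambda>a b. sub_arrow m n ?R a b \<or> sub_arrow m n ?R b a"
  have sym_E: "?E\<inverse>\<inverse> = ?E" by (auto simp: fun_eq_iff)
  have conn: "?E\<^sup>*\<^sup>* z z'" if "z \<in> ?R" "z' \<in> ?R" for z z'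
  proof -
    have E_mono: "(sub_arrow m n ?R)\<^sup>*\<^sup>* \<le> ?E\<^sup>*\<^sup>*" by (rule rtranclp_mono) auto
    have "?E\<^sup>*\<^sup>* x z" "?E\<^sup>*\<^sup>* x z'" using from_x that E_mono by blast+
    then have "?E\<^sup>*\<^sup>* z x" "?E\<^sup>*\<^sup>* x z'" using rtranclp_converseI[of ?E x z] sym_E by auto
    then show ?thesis by simp
  qed
  have "x \<in> ?R" using assms by (auto simp: grid_path_iff rect_def)
  then show ?thesis
    using sub conn unfolding is_interval_def by (auto simp: grid_path_iff rect_def)
qed

lemma rect_subset_interval_iff:
  assumes "is_interval m n I" "grid_path m n x y"
  shows "rect x y \<subseteq> I \<longleftrightarrow> x \<in> I \<and> y \<in> I"
proof
  have "x \<in> rect x y" "y \<in> rect x y" using assms(2) by (auto simp: grid_path_iff rect_def)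
  then show "rect x y \<subseteq> I \<Longrightarrow> x \<in> I \<and> y \<in> I" by blast
qed (use rect_subset_interval[OF assms(1)] in blast)

section \<open>The Moebius function of the poset of intervals\<close>

declare mobius.simps[simp del]

definition intervals_between :: "nat \<Rightarrow> nat \<Rightarrow> vertex set \<Rightarrow> vertex set \<Rightarrow> vertex set set" where
  "intervals_between m n I J = {L \<in> intervals m n. I \<subseteq> L \<and> L \<subseteq> J}"

lemma finite_intervals_between: "finite (intervals_between m n I J)"
  by (rule finite_subset[OF _ finite_intervals]) (auto simp: intervals_between_def)

lemma intervals_between_refl:
  "I \<in> intervals m n \<Longrightarrow> intervals_between m n I I = {I}"
  by (auto simp: intervals_between_def)

lemma mobius_refl: "mobius m n I I = 1"
  by (simp add: mobius.simps)

lemma mobius_sum_left: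
  assumes "I \<in> intervals m n" "J \<in> intervals m n" "I \<subseteq> J"
  shows "(\<Sum>L\<in>intervals_between m n I J. mobius m n I L) = (if I = J then 1 else 0)"
proof (cases "I = J")
  case False
  let ?A = "{L. is_interval m n L \<and> I \<subseteq> L \<and> L \<subset> J}"
  have "finite J" using assms(2) finite_interval by (auto simp: intervals_def)
  then have "mobius m n I J = - (\<Sum>L\<in>?A. mobius m n I L)"
    using False assms(3) by (simp add: mobius.simps)
  moreover have "intervals_between m n I J = insert J ?A" "J \<notin> ?A"
    using assms by (auto simp: intervals_between_def intervals_def)
  moreover have "finite ?A"
    using finite_intervals_between[of m n I J] calculation(2) by auto
  ultimately show ?thesis using False by simp
qed (use assms in \<open>simp add: intervals_between_refl mobius_refl\<close>)

lemma mobius_convolution: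
  assumes I: "I \<in> intervals m n" and "I \<subseteq> J"
  shows "(\<Sum>K\<in>intervals_between m n I J.
            mobius m n I K * (\<Sum>L\<in>intervals_between m n K J. mobius m n L J)) = mobius m n I J"
proof -
  let ?A = "intervals_between m n I J"
  have "(\<Sum>K\<in>?A. mobius m n I K * (\<Sum>L\<in>intervals_between m n K J. mobius m n L J))
      = (\<Sum>K\<in>?A. \<Sum>L\<in>{L \<in> ?A. K \<subseteq> L}. mobius m n I K * mobius m n L J)"
    by (rule sum.cong) (auto simp: intervals_between_def sum_distrib_left intro!: sum.cong)
  also have "\<dots> = (\<Sum>L\<in>?A. \<Sum>K\<in>{K \<in> ?A. K \<subseteq> L}. mobius m n I K * mobius m n L J)"
    by (rule sum.swap_restrict) (auto simp: finite_intervals_between)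
  also have "\<dots> = (\<Sum>L\<in>?A. (\<Sum>K\<in>intervals_between m n I L. mobius m n I K) * mobius m n L J)"
    by (rule sum.cong) (auto simp: intervals_between_def sum_distrib_right intro!: sum.cong)
  also have "\<dots> = (\<Sum>L\<in>?A. if L = I then mobius m n I J else 0)"
  proof (rule sum.cong[OF refl])
    fix L assume "L \<in> ?A"
    then have "L \<in> intervals m n" "I \<subseteq> L" by (auto simp: intervals_between_def)
    then show "(\<Sum>K\<in>intervals_between m n I L. mobius m n I K) * mobius m n L J
        = (if L = I then mobius m n I J else 0)"
      using mobius_sum_left[OF I] by auto
  qed
  also have "\<dots> = mobius m n I J"
  proof -
    have "I \<in> ?A" using I assms(2) by (simp add: intervals_between_def)
    then show ?thesis by (simp add: finite_intervals_between)
  qed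
  finally show ?thesis .
qed

lemma mobius_sum_right:
  assumes "I \<in> intervals m n" "J \<in> intervals m n" "I \<subseteq> J"
  shows "(\<Sum>L\<in>intervals_between m n I J. mobius m n L J) = (if I = J then 1 else 0)"
  using assms
proof (induction "card J - card I" arbitrary: I rule: less_induct)
  case less
  define h where "h K = (\<Sum>L\<in>intervals_between m n K J. mobius m n L J)" for K
  let ?A = "intervals_between m n I J"
  show ?case
  proof (cases "I = J")
    case False
    have finJ: "finite J" using less.prems(2) finite_interval by (auto simp: intervals_def)
    have h_above: "h K = (if K = J then 1 else 0)" if K: "K \<in> ?A - {I}" for K
    proof -
      have "I \<subset> K" "K \<subseteq> J" using K by (auto simp: intervals_between_def)
      then have "card I < card K" "card K \<le> card J"
        using finJ by (auto intro: psubset_card_mono card_mono finite_subset)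
      then show ?thesis unfolding h_def
        using less K by (auto simp: intervals_between_def)
    qed
    have "I \<in> ?A" "J \<in> ?A - {I}" using less.prems False by (auto simp: intervals_between_def)
    have "(\<Sum>K\<in>?A - {I}. mobius m n I K * h K) = (\<Sum>K\<in>?A - {I}. if K = J then mobius m n I J else 0)"
      by (rule sum.cong) (simp_all add: h_above)
    also have "\<dots> = mobius m n I J"
      using \<open>J \<in> ?A - {I}\<close> by (simp add: sum.delta' finite_intervals_between)
    finally have "(\<Sum>K\<in>?A. mobius m n I K * h K) = h I + mobius m n I J"
      using \<open>I \<in> ?A\<close> by (simp add: sum.remove[OF finite_intervals_between] mobius_refl)
    moreover have "(\<Sum>K\<in>?A. mobius m n I K * h K) = mobius m n I J"
      unfolding h_def by (rule mobius_convolution[OF less.prems(1,3)])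
    ultimately show ?thesis using False by (simp add: h_def)
  qed (use less.prems in \<open>simp add: intervals_between_refl mobius_refl\<close>)
qed

lemma mobius_inversion_above:
  fixes d :: "vertex set \<Rightarrow> int"
  assumes R: "R \<in> intervals m n"
  shows "(\<Sum>I\<in>{I \<in> intervals m n. R \<subseteq> I}.
            \<Sum>J\<in>{J \<in> intervals m n. I \<subseteq> J}. mobius m n I J * d J) = d R"
proof -
  let ?Int = "intervals m n"
  have "(\<Sum>I\<in>{I \<in> ?Int. R \<subseteq> I}. \<Sum>J\<in>{J \<in> ?Int. I \<subseteq> J}. mobius m n I J * d J)
      = (\<Sum>J\<in>?Int. \<Sum>I\<in>{I \<in> {I \<in> ?Int. R \<subseteq> I}. I \<subseteq> J}. mobius m n I J * d J)"
    by (rule sum.swap_restrict) (auto simp: finite_intervals)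
  also have "\<dots> = (\<Sum>J\<in>?Int. (\<Sum>I\<in>intervals_between m n R J. mobius m n I J) * d J)"
    by (rule sum.cong) (auto simp: intervals_between_def sum_distrib_right intro!: sum.cong)
  also have "\<dots> = (\<Sum>J\<in>?Int. if J = R then d J else 0)"
  proof (rule sum.cong[OF refl])
    fix J assume J: "J \<in> ?Int"
    show "(\<Sum>I\<in>intervals_between m n R J. mobius m n I J) * d J = (if J = R then d J else 0)"
    proof (cases "R \<subseteq> J")
      case False
      then have "intervals_between m n R J = {}" by (auto simp: intervals_between_def)
      with False show ?thesis by auto
    qed (use mobius_sum_right[OF R J] in auto)
  qed
  also have "\<dots> = d R" using R by (simp add: finite_intervals)
  finally show ?thesis .
qed

fun mat_chain :: "(nat \<Rightarrow> 'a::semiring_1 mat) \<Rightarrow> nat \<Rightarrow> nat \<Rightarrow> 'a mat" where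
  "mat_chain f d 0 = 1\<^sub>m d"
| "mat_chain f d (Suc l) = f l * mat_chain f d l"

lemma mat_chain_carrier:
  "(\<And>t. t < l \<Longrightarrow> f t \<in> carrier_mat (D (Suc t)) (D t)) \<Longrightarrow>
   mat_chain f (D 0) l \<in> carrier_mat (D l) (D 0)"
proof (induction l)
  case (Suc l)
  then show ?case by (simp add: mult_carrier_mat[OF Suc.prems[OF lessI]])
qed simp

lemma mat_chain_one:
  "(\<And>t. t < l \<Longrightarrow> f t = 1\<^sub>m d) \<Longrightarrow> mat_chain f d l = 1\<^sub>m d"
  by (induction l) auto

lemma mat_chain_add:
  assumes f: "\<And>t. t < l1 + l2 \<Longrightarrow> f t \<in> carrier_mat (D (Suc t)) (D t)"
  shows "mat_chain f (D 0) (l1 + l2) = mat_chain (\<lambda>t. f (l1 + t)) (D l1) l2 * mat_chain f (D 0) l1"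
  using f
proof (induction l2)
  case 0
  then show ?case using mat_chain_carrier[of l1 f D] by simp
next
  case (Suc l2)
  have f1: "mat_chain f (D 0) l1 \<in> carrier_mat (D l1) (D 0)"
    using Suc.prems by (intro mat_chain_carrier) simp
  have f2: "mat_chain (\<lambda>t. f (l1 + t)) (D (l1 + 0)) l2 \<in> carrier_mat (D (l1 + l2)) (D (l1 + 0))"
    using Suc.prems by (intro mat_chain_carrier[of l2 _ "\<lambda>t. D (l1 + t)"]) simp
  have f3: "f (l1 + l2) \<in> carrier_mat (D (Suc (l1 + l2))) (D (l1 + l2))"
    using Suc.prems by simp
  show ?case
    using Suc assoc_mult_mat[OF f3 f2[simplified] f1] by simp
qed

lemma mat_chain_ladder:
  assumes f: "\<And>t. t < l \<Longrightarrow> f t \<in> carrier_mat (Df (Suc t)) (Df t)"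
    and g: "\<And>t. t < l \<Longrightarrow> g t \<in> carrier_mat (Dg (Suc t)) (Dg t)"
    and U: "\<And>t. t \<le> l \<Longrightarrow> U t \<in> carrier_mat (Dg t) (Df t)"
    and square: "\<And>t. t < l \<Longrightarrow> g t * U t = U (Suc t) * f t"
  shows "mat_chain g (Dg 0) l * U 0 = U l * mat_chain f (Df 0) l"
  using assms
proof (induction l)
  case 0
  then show ?case using U[of 0] by simp
next
  case (Suc l)
  have F: "mat_chain f (Df 0) l \<in> carrier_mat (Df l) (Df 0)"
    and G: "mat_chain g (Dg 0) l \<in> carrier_mat (Dg l) (Dg 0)"
    using Suc.prems by (auto intro!: mat_chain_carrier)
  have fl: "f l \<in> carrier_mat (Df (Suc l)) (Df l)" and gl: "g l \<in> carrier_mat (Dg (Suc l)) (Dg l)"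
    and U0: "U 0 \<in> carrier_mat (Dg 0) (Df 0)" and Ul: "U l \<in> carrier_mat (Dg l) (Df l)"
    and USl: "U (Suc l) \<in> carrier_mat (Dg (Suc l)) (Df (Suc l))"
    using Suc.prems by auto
  have "mat_chain g (Dg 0) (Suc l) * U 0 = g l * (mat_chain g (Dg 0) l * U 0)"
    using assoc_mult_mat[OF gl G U0] by simp
  also have "\<dots> = (g l * U l) * mat_chain f (Df 0) l"
    using Suc assoc_mult_mat[OF gl Ul F] by simp
  also have "\<dots> = U (Suc l) * mat_chain f (Df 0) (Suc l)"
    using Suc.prems(4)[of l] assoc_mult_mat[OF USl fl F] by simp
  finally show ?case .
qed

lemma hcomp_eq_mat_chain: "hcomp M a b l = mat_chain (\<lambda>t. hmap M (a, b + t)) (rdim M (a, b)) l"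
  by (induction l) simp_all

lemma vcomp_eq_mat_chain: "vcomp M a b l = mat_chain (\<lambda>t. vmap M (a + t, b)) (rdim M (a, b)) l"
  by (induction l) simp_all

context
  fixes m n :: nat and M :: "'k::field grid_rep"
  assumes rep: "is_grid_rep m n M"
begin

lemma hmap_carrier:
  "1 \<le> a \<Longrightarrow> a \<le> m \<Longrightarrow> 1 \<le> b \<Longrightarrow> b < n \<Longrightarrow>
   hmap M (a, b) \<in> carrier_mat (rdim M (a, Suc b)) (rdim M (a, b))"
  using rep by (simp add: is_grid_rep_def)

lemma vmap_carrier:
  "1 \<le> a \<Longrightarrow> a < m \<Longrightarrow> 1 \<le> b \<Longrightarrow> b \<le> n \<Longrightarrow>
   vmap M (a, b) \<in> carrier_mat (rdim M (Suc a, b)) (rdim M (a, b))"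
  using rep by (simp add: is_grid_rep_def)

lemma hcomp_carrier:
  "1 \<le> a \<Longrightarrow> a \<le> m \<Longrightarrow> 1 \<le> b \<Longrightarrow> b + l \<le> n \<Longrightarrow>
   hcomp M a b l \<in> carrier_mat (rdim M (a, b + l)) (rdim M (a, b))"
  using mat_chain_carrier[of l "\<lambda>t. hmap M (a, b + t)" "\<lambda>t. rdim M (a, b + t)"]
  by (simp add: hcomp_eq_mat_chain hmap_carrier)

lemma vcomp_carrier:
  "1 \<le> a \<Longrightarrow> a + l \<le> m \<Longrightarrow> 1 \<le> b \<Longrightarrow> b \<le> n \<Longrightarrow>
   vcomp M a b l \<in> carrier_mat (rdim M (a + l, b)) (rdim M (a, b))"
  using mat_chain_carrier[of l "\<lambda>t. vmap M (a + t, b)" "\<lambda>t. rdim M (a + t, b)"]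
  by (simp add: vcomp_eq_mat_chain vmap_carrier)

lemma hcomp_add:
  "1 \<le> a \<Longrightarrow> a \<le> m \<Longrightarrow> 1 \<le> b \<Longrightarrow> b + l1 + l2 \<le> n \<Longrightarrow>
   hcomp M a b (l1 + l2) = hcomp M a (b + l1) l2 * hcomp M a b l1"
  using mat_chain_add[of l1 l2 "\<lambda>t. hmap M (a, b + t)" "\<lambda>t. rdim M (a, b + t)"]
  by (simp add: hcomp_eq_mat_chain hmap_carrier add.assoc)

lemma vcomp_add:
  "1 \<le> a \<Longrightarrow> a + l1 + l2 \<le> m \<Longrightarrow> 1 \<le> b \<Longrightarrow> b \<le> n \<Longrightarrow>
   vcomp M a b (l1 + l2) = vcomp M (a + l1) b l2 * vcomp M a b l1"
  using mat_chain_add[of l1 l2 "\<lambda>t. vmap M (a + t, b)" "\<lambda>t. rdim M (a + t, b)"]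
  by (simp add: vcomp_eq_mat_chain vmap_carrier add.assoc)

lemma vcomp_hmap_comm:
  assumes "1 \<le> a" "a + p \<le> m" "1 \<le> b" "b < n"
  shows "vcomp M a (Suc b) p * hmap M (a, b) = hmap M (a + p, b) * vcomp M a b p"
  using mat_chain_ladder[of p "\<lambda>t. vmap M (a + t, b)" "\<lambda>t. rdim M (a + t, b)"
      "\<lambda>t. vmap M (a + t, Suc b)" "\<lambda>t. rdim M (a + t, Suc b)" "\<lambda>t. hmap M (a + t, b)"]
    assms rep
  by (simp add: vcomp_eq_mat_chain hmap_carrier vmap_carrier is_grid_rep_def)

lemma hcomp_vcomp_comm:
  assumes "1 \<le> a" "a + p \<le> m" "1 \<le> b" "b + q \<le> n"
  shows "hcomp M (a + p) b q * vcomp M a b p = vcomp M a (b + q) p * hcomp M a b q"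
  using mat_chain_ladder[of q "\<lambda>t. hmap M (a, b + t)" "\<lambda>t. rdim M (a, b + t)"
      "\<lambda>t. hmap M (a + p, b + t)" "\<lambda>t. rdim M (a + p, b + t)" "\<lambda>t. vcomp M a (b + t) p"]
    assms
  by (simp add: hcomp_eq_mat_chain hmap_carrier vcomp_carrier vcomp_hmap_comm)

lemma path_map_carrier:
  assumes "grid_path m n s t"
  shows "path_map M s t \<in> carrier_mat (rdim M t) (rdim M s)"
proof -
  obtain a b c d where s: "s = (a, b)" and t: "t = (c, d)" by (cases s, cases t)
  have "1 \<le> a" "a \<le> c" "c \<le> m" "1 \<le> b" "b \<le> d" "d \<le> n"
    using assms by (auto simp: grid_path_iff grid_vertices_def s t)
  then show ?thesis
    using hcomp_carrier[of c b "d - b"] vcomp_carrier[of a "c - a" b]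
    by (simp add: path_map_def s t)
qed

lemma path_map_comp:
  assumes "grid_path m n s t" "grid_path m n t u"
  shows "path_map M t u * path_map M s t = path_map M s u"
proof -
  obtain a b c d e f where s: "s = (a, b)" and t: "t = (c, d)" and u: "u = (e, f)"
    by (cases s, cases t, cases u)
  have g: "1 \<le> a" "a \<le> c" "c \<le> e" "e \<le> m" "1 \<le> b" "b \<le> d" "d \<le> f" "f \<le> n"
    using assms by (auto simp: grid_path_iff grid_vertices_def s t u)
  define H1 where "H1 = hcomp M e d (f - d)"
  define V1 where "V1 = vcomp M c d (e - c)"
  define H2 where "H2 = hcomp M c b (d - b)"
  define V2 where "V2 = vcomp M a b (c - a)"
  define H3 where "H3 = hcomp M e b (d - b)"
  define V3 where "V3 = vcomp M c b (e - c)"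
  note carriers = hcomp_carrier vcomp_carrier
  have cH1: "H1 \<in> carrier_mat (rdim M (e, f)) (rdim M (e, d))"
    and cV1: "V1 \<in> carrier_mat (rdim M (e, d)) (rdim M (c, d))"
    and cH2: "H2 \<in> carrier_mat (rdim M (c, d)) (rdim M (c, b))"
    and cV2: "V2 \<in> carrier_mat (rdim M (c, b)) (rdim M (a, b))"
    and cH3: "H3 \<in> carrier_mat (rdim M (e, d)) (rdim M (e, b))"
    and cV3: "V3 \<in> carrier_mat (rdim M (e, b)) (rdim M (c, b))"
    using g carriers[of e d "f - d"] carriers[of c "e - c" d] carriers[of c b "d - b"]
      carriers[of a "c - a" b] carriers[of e b "d - b"] carriers[of c "e - c" b]
    by (simp_all add: H1_def V1_def H2_def V2_def H3_def V3_def)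
  have square: "H3 * V3 = V1 * H2"
    using hcomp_vcomp_comm[of c "e - c" b "d - b"] g by (simp add: H3_def V3_def V1_def H2_def)
  have "path_map M t u * path_map M s t = H1 * (V1 * (H2 * V2))"
    using assoc_mult_mat[OF cH1 cV1 mult_carrier_mat[OF cH2 cV2]]
    by (simp add: path_map_def s t u H1_def V1_def H2_def V2_def)
  also have "\<dots> = H1 * ((H3 * V3) * V2)"
    by (simp add: square assoc_mult_mat[OF cV1 cH2 cV2])
  also have "\<dots> = (H1 * H3) * (V3 * V2)"
    by (simp add: assoc_mult_mat[OF cH3 cV3 cV2] assoc_mult_mat[OF cH1 cH3 mult_carrier_mat[OF cV3 cV2]])
  also have "\<dots> = path_map M s u"
    using g hcomp_add[of e b "d - b" "f - d"] vcomp_add[of a "c - a" "e - c" b]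
    by (simp add: path_map_def s u H1_def H3_def V2_def V3_def)
  finally show ?thesis .
qed

end

section \<open>Rank via splittings\<close>

lemma mat_rank_one: "mat_rank (1\<^sub>m 1 :: 'k::field mat) = 1"
  using vec_space.det_rank_iff[of "1\<^sub>m 1 :: 'k mat" 1] by (simp add: mat_rank_def)

lemma mat_rank_no_cols: "(A :: 'k::field mat) \<in> carrier_mat r 0 \<Longrightarrow> mat_rank A = 0"
  using vec_space.rank_le_nc[of A r 0] by (simp add: mat_rank_def)

lemma mat_rank_no_rows: "(A :: 'k::field mat) \<in> carrier_mat 0 c \<Longrightarrow> mat_rank A = 0"
proof -
  assume "A \<in> carrier_mat 0 c"
  then have "A = 0\<^sub>m 0 c" by (intro eq_matI) auto
  then show ?thesis using vec_space.rank_0I[of 0 c] by (simp add: mat_rank_def)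
qed

lemma (in vec_space) rank_mult_le:
  assumes F: "F \<in> carrier_mat n nc" and G: "G \<in> carrier_mat nc k"
  shows "rank (F * G) \<le> rank F"
proof -
  define W where "W = span (set (cols F))"
  have FG: "F * G \<in> carrier_mat n k" using F G by simp
  have W: "subspace class_ring W V"
    using span_is_subspace W_def F cols_dim carrier_matD by auto
  have FG_W: "set (cols (F * G)) \<subseteq> W"
  proof
    fix x assume "x \<in> set (cols (F * G))"
    then obtain l where l: "l < k" "x = col (F * G) l" using FG by (auto simp: in_set_conv_nth)
    then have x: "x = F *\<^sub>v col G l" using col_mult2[OF F G l(1)] by simp
    have "col G l \<in> carrier_vec (dim_col F)" unfolding carrier_vec_def using F G by simp
    then show "x \<in> W" unfolding W_def using col_space_eq[OF F] x F
      by (auto simp: col_space_def)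
  qed
  have "subspace class_ring (span (set (cols (F * G)))) V"
    by (metis FG cols_dim carrier_matD(1) span_is_subspace)
  moreover have "span (set (cols (F * G))) \<subseteq> W"
    using FG_W W span_is_subset by (simp add: subspace_def)
  ultimately have "subspace class_ring (span (set (cols (F * G)))) (vs W)"
    by (rule nested_subspaces[OF W])
  moreover have "vectorspace.fin_dim class_ring (vs W)"
    using W_def F fin_dim_span_cols by auto
  moreover have "vectorspace.fin_dim class_ring (span_vs (set (cols (F * G))))"
    using FG fin_dim_span_cols by blast
  ultimately show ?thesis
    unfolding rank_def W_def[symmetric]
    using vectorspace.subspace_dim[OF subspace_is_vs[OF W]] by auto
qed

lemma (in vec_space) rank_left_invertible:
  assumes X: "X \<in> carrier_mat n k" and C: "C \<in> carrier_mat k n" and CX: "C * X = 1\<^sub>m k"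
  shows "rank X = k"
proof -
  have colX: "C *\<^sub>v col X a = unit_vec k a" if "a < k" for a
    using col_mult2[OF C X that] CX that by simp
  have "distinct (cols X)"
  proof (subst distinct_conv_nth, intro allI impI)
    fix a b assume "a < length (cols X)" "b < length (cols X)" "a \<noteq> b"
    then show "cols X ! a \<noteq> cols X ! b"
      using X colX[of a] colX[of b] by (auto simp: unit_vec_eq)
  qed
  moreover have "lin_indpt (set (cols X))"
  proof
    assume "lin_dep (set (cols X))"
    then obtain v where v: "v \<in> carrier_vec k" "v \<noteq> 0\<^sub>v k" "X *\<^sub>v v = 0\<^sub>v n"
      using lin_depE[OF X _ \<open>distinct (cols X)\<close>] by blast
    have "v = (C * X) *\<^sub>v v" using CX v by simp
    also have "\<dots> = C *\<^sub>v (X *\<^sub>v v)" using C X v by simp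
    also have "\<dots> = 0\<^sub>v k" using v C by (intro eq_vecI) auto
    finally show False using v by simp
  qed
  ultimately show ?thesis using lin_indpt_full_rank[OF X] by blast
qed

lemma mat_rank_ge_split:
  fixes A :: "'k::field mat"
  assumes A: "A \<in> carrier_mat d1 d2" and B: "B \<in> carrier_mat d2 k" and C: "C \<in> carrier_mat k d1"
    and CAB: "C * (A * B) = 1\<^sub>m k"
  shows "k \<le> mat_rank A"
proof -
  interpret vec_space "TYPE('k)" d1 .
  have "k = rank (A * B)" using rank_left_invertible[OF _ C CAB] A B by simp
  also have "\<dots> \<le> rank A" by (rule rank_mult_le[OF A B])
  finally show ?thesis using A by (simp add: mat_rank_def)
qed

lemma (in vec_space) indpt_cols_of_rank:
  assumes A: "A \<in> carrier_mat n nc"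
  obtains xs where "distinct xs" "set xs \<subseteq> set (cols A)" "lin_indpt (set xs)" "length xs = rank A"
proof -
  let ?P = "\<lambda>T. T \<subseteq> set (cols A) \<and> lin_indpt T"
  obtain S where S: "maximal S ?P"
    using maximal_exists[of ?P "card (set (cols A))" "{}"]
    by (meson List.finite_set card_mono empty_iff empty_subsetI finite_lin_indpt2 rev_finite_subset)
  then have "S \<subseteq> set (cols A)" "lin_indpt S" by (auto simp: maximal_def)
  moreover obtain xs where "set xs = S" "distinct xs"
    using finite_distinct_list[OF finite_subset[OF \<open>S \<subseteq> set (cols A)\<close>]] by blast
  moreover have "card S = rank A" using rank_card_indpt[OF A S] by simp
  ultimately show ?thesis using that distinct_card by metis
qed

lemma (in vec_space) lin_indpt_extends_to_basis:
  assumes S: "S \<subseteq> carrier_vec n" "lin_indpt S"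
  obtains T where "S \<subseteq> T" "finite T" "basis T" "card T = n"
proof -
  let ?P = "\<lambda>T. S \<subseteq> T \<and> T \<subseteq> carrier_vec n \<and> lin_indpt T"
  have bounded: "finite T \<and> card T \<le> n" if "?P T" for T
    using li_le_dim[OF fin_dim, of T] that dim_is_n by auto
  obtain T where T: "maximal T ?P" using maximal_exists[of ?P n S] bounded S by blast
  then have ST: "S \<subseteq> T" and T_li: "T \<subseteq> carrier_vec n" "lin_indpt T"
    by (auto simp: maximal_def)
  then have "finite T" using bounded by blast
  have "maximal T (\<lambda>T. T \<subseteq> carrier_vec n \<and> lin_indpt T)"
    unfolding maximal_def
  proof (intro conjI allI impI)
    fix B assume "T \<subseteq> B \<and> B \<subseteq> carrier_vec n \<and> lin_indpt B"
    then show "B = T" using T ST unfolding maximal_def by blast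
  qed (use T_li in auto)
  then have "basis T" by (rule max_li_is_basis)
  then show ?thesis using that ST \<open>finite T\<close> dim_basis dim_is_n by metis
qed

lemma (in vec_space) indpt_cols_left_inverse:
  assumes xs: "distinct xs" "set xs \<subseteq> carrier_vec n" "lin_indpt (set xs)"
  obtains C where "C \<in> carrier_mat (length xs) n" "C * mat_of_cols n xs = 1\<^sub>m (length xs)"
proof -
  obtain T where T: "set xs \<subseteq> T" "finite T" "basis T" "card T = n"
    using lin_indpt_extends_to_basis[OF xs(2,3)] .
  obtain ys where ys: "set ys = T - set xs" "distinct ys"
    using finite_distinct_list[of "T - set xs"] T(2) by blast
  let ?zs = "xs @ ys"
  have zs: "set ?zs = T" "distinct ?zs" using xs ys T by auto
  then have "length ?zs = n" using T(4) distinct_card by metis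
  let ?Y = "mat_of_cols n ?zs"
  have Y: "?Y \<in> carrier_mat n n" using mat_of_cols_carrier(1)[of n ?zs] \<open>length ?zs = n\<close> by simp
  have "cols ?Y = ?zs" using zs T(3) by (simp add: basis_def)
  then have "rank ?Y = n" using lin_indpt_full_rank[OF Y] zs T(3) by (simp add: basis_def)
  then have "?Y \<in> Units (ring_mat TYPE('a) n ())"
    using det_rank_iff[OF Y] det_non_zero_imp_unit[OF Y] by simp
  then obtain Z where Z: "Z \<in> carrier_mat n n" and ZY: "Z * ?Y = 1\<^sub>m n"
    by (auto simp: Units_def ring_mat_simps)
  define r where "r = length xs"
  have r: "r \<le> n" using \<open>length ?zs = n\<close> by (simp add: r_def)
  define C where "C = mat r n (\<lambda>(a, b). Z $$ (a, b))"
  have "C * mat_of_cols n xs = 1\<^sub>m r"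
  proof (rule eq_matI)
    fix a b assume "a < dim_row (1\<^sub>m r :: 'a mat)" "b < dim_col (1\<^sub>m r :: 'a mat)"
    then have ab: "a < r" "b < r" by auto
    have "(C * mat_of_cols n xs) $$ (a, b) = (\<Sum>c = 0..<n. Z $$ (a, c) * ?Y $$ (c, b))"
      using ab r by (simp add: C_def r_def mat_of_cols_def scalar_prod_def nth_append)
    also have "\<dots> = (Z * ?Y) $$ (a, b)"
      using Z Y ab r \<open>length ?zs = n\<close> by (simp add: scalar_prod_def)
    finally show "(C * mat_of_cols n xs) $$ (a, b) = 1\<^sub>m r $$ (a, b)" using ZY ab r by simp
  qed (auto simp: C_def r_def)
  moreover have "C \<in> carrier_mat r n" by (simp add: C_def)
  ultimately show ?thesis using that by (simp add: r_def)
qed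

lemma column_selection:
  fixes A :: "'a::semiring_1 mat"
  assumes A: "A \<in> carrier_mat d1 d2" and xs: "set xs \<subseteq> set (cols A)"
  obtains B where "B \<in> carrier_mat d2 (length xs)" "A * B = mat_of_cols d1 xs"
proof -
  have "\<exists>c < d2. col A c = xs ! b" if "b < length xs" for b
  proof -
    have "xs ! b \<in> set (cols A)" using that xs by auto
    then show ?thesis using A by (auto simp: in_set_conv_nth)
  qed
  then obtain idx where idx: "\<And>b. b < length xs \<Longrightarrow> idx b < d2 \<and> col A (idx b) = xs ! b"
    by metis
  define B where "B = mat d2 (length xs) (\<lambda>(a, b). if a = idx b then 1 else (0 :: 'a))"
  have "A * B = mat_of_cols d1 xs"
  proof (rule eq_matI)
    fix c b assume "c < dim_row (mat_of_cols d1 xs)" "b < dim_col (mat_of_cols d1 xs)"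
    then have cb: "c < d1" "b < length xs" by auto
    have "(A * B) $$ (c, b) = (\<Sum>a = 0..<d2. A $$ (c, a) * (if a = idx b then 1 else 0))"
      using A cb by (simp add: B_def scalar_prod_def)
    also have "\<dots> = (\<Sum>a = 0..<d2. if a = idx b then A $$ (c, a) else 0)"
      by (rule sum.cong) auto
    also have "\<dots> = A $$ (c, idx b)" using idx[OF cb(2)] by simp
    also have "\<dots> = xs ! b $ c" using A cb idx[OF cb(2)] by (metis carrier_matD(1,2) index_col)
    finally show "(A * B) $$ (c, b) = mat_of_cols d1 xs $$ (c, b)"
      using cb by (simp add: mat_of_cols_def)
  qed (use A in \<open>auto simp: B_def\<close>)
  moreover have "B \<in> carrier_mat d2 (length xs)" by (simp add: B_def)
  ultimately show ?thesis using that by blast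
qed

lemma mat_rank_split:
  fixes A :: "'k::field mat"
  assumes A: "A \<in> carrier_mat d1 d2"
  obtains B C where "B \<in> carrier_mat d2 (mat_rank A)" "C \<in> carrier_mat (mat_rank A) d1"
    "C * (A * B) = 1\<^sub>m (mat_rank A)"
proof -
  interpret vec_space "TYPE('k)" d1 .
  obtain xs where xs: "distinct xs" "set xs \<subseteq> set (cols A)" "lin_indpt (set xs)"
    and len: "length xs = mat_rank A"
    using indpt_cols_of_rank[OF A] A by (auto simp: mat_rank_def)
  obtain B where B: "B \<in> carrier_mat d2 (length xs)" "A * B = mat_of_cols d1 xs"
    using column_selection[OF A xs(2)] .
  have "set xs \<subseteq> carrier_vec d1" using xs(2) A cols_dim by blast
  then obtain C where "C \<in> carrier_mat (length xs) d1" "C * mat_of_cols d1 xs = 1\<^sub>m (length xs)"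
    using indpt_cols_left_inverse xs(1,3) by blast
  then show ?thesis using that B len by metis
qed

lemma rdim_interval_rep: "rdim (interval_rep I) x = (if x \<in> I then 1 else 0)"
  by (simp add: interval_rep_def)

lemma interval_rep_is_grid_rep:
  assumes I: "is_interval m n I"
  shows "is_grid_rep m n (interval_rep I :: 'k::field grid_rep)"
proof -
  have square: "hmap (interval_rep I) (Suc a, b) * vmap (interval_rep I) (a, b)
      = vmap (interval_rep I) (a, Suc b) * (hmap (interval_rep I) (a, b) :: 'k mat)"
    if "1 \<le> a" "a < m" "1 \<le> b" "b < n" for a b
  proof (cases "(a, b) \<in> I \<and> (Suc a, Suc b) \<in> I")
    case True
    then have "rect (a, b) (Suc a, Suc b) \<subseteq> I" using rect_subset_interval[OF I] by blast
    then have "(Suc a, b) \<in> I" "(a, Suc b) \<in> I" by (auto simp: rect_def)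
    with True show ?thesis by (simp add: interval_rep_def)
  next
    case False
    then show ?thesis by (auto simp: interval_rep_def intro!: eq_matI)
  qed
  then show ?thesis by (auto simp: is_grid_rep_def interval_rep_def)
qed

lemma path_map_interval_rep:
  assumes I: "is_interval m n I" and xy: "grid_path m n x y" "x \<in> I" "y \<in> I"
  shows "path_map (interval_rep I :: 'k::field grid_rep) x y = 1\<^sub>m 1"
proof -
  obtain a b c d where x: "x = (a, b)" and y: "y = (c, d)" by (cases x, cases y)
  have R: "rect x y \<subseteq> I" using rect_subset_interval[OF I xy(2,3)] .
  have le: "a \<le> c" "b \<le> d" using xy(1) by (auto simp: grid_path_iff x y)
  have "hcomp (interval_rep I :: 'k grid_rep) c b (d - b) = 1\<^sub>m 1"
    using R le unfolding hcomp_eq_mat_chain rdim_interval_rep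
    by (auto simp: interval_rep_def rect_def x y subset_iff intro!: mat_chain_one)
  moreover have "vcomp (interval_rep I :: 'k grid_rep) a b (c - a) = 1\<^sub>m 1"
    using R le unfolding vcomp_eq_mat_chain rdim_interval_rep
    by (auto simp: interval_rep_def rect_def x y subset_iff intro!: mat_chain_one)
  ultimately show ?thesis by (simp add: path_map_def x y)
qed

lemma mat_rank_path_map_interval_rep:
  assumes I: "is_interval m n I" and xy: "grid_path m n x y"
  shows "mat_rank (path_map (interval_rep I :: 'k::field grid_rep) x y) = (if x \<in> I \<and> y \<in> I then 1 else 0)"
proof -
  have "path_map (interval_rep I :: 'k grid_rep) x y
      \<in> carrier_mat (if y \<in> I then 1 else 0) (if x \<in> I then 1 else 0)"
    using path_map_carrier[OF interval_rep_is_grid_rep[OF I] xy] by (simp add: rdim_interval_rep)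
  then show ?thesis
    using path_map_interval_rep[OF I xy, where 'k = 'k] mat_rank_one[where 'k = 'k]
      mat_rank_no_cols mat_rank_no_rows
    by (cases "x \<in> I"; cases "y \<in> I") simp_all
qed

section \<open>The compressed multiplicity of a rectangle\<close>

lemma ess_vertices_rect:
  assumes "grid_path m n i j"
  shows "i \<in> ess_vertices m n k (rect i j)" "j \<in> ess_vertices m n k (rect i j)"
    "ess_vertices m n k (rect i j) \<subseteq> rect i j"
proof -
  have i: "i \<in> rect i j" and j: "j \<in> rect i j" using assms by (auto simp: grid_path_iff rect_def)
  have "i \<in> ss_vertices m n (rect i j)"
    using i by (auto simp: ss_vertices_def sub_arrow_def grid_arrow_def rect_def)
  with i show "i \<in> ess_vertices m n k (rect i j)"
    by (cases k) (auto simp: ess_vertices_def mem_Times_iff)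
  have "j \<in> ss_vertices m n (rect i j)"
    using j by (auto simp: ss_vertices_def sub_arrow_def grid_arrow_def rect_def)
  with j show "j \<in> ess_vertices m n k (rect i j)"
    by (cases k) (auto simp: ess_vertices_def mem_Times_iff)
  show "ess_vertices m n k (rect i j) \<subseteq> rect i j"
    by (cases k) (auto simp: ess_vertices_def ss_vertices_def)
qed

lemma grid_path_through_rect:
  assumes "grid_path m n i j" "s \<in> rect i j"
  shows "grid_path m n i s" "grid_path m n s j"
  using assms by (auto simp: grid_path_iff rect_def grid_vertices_def)

lemma mat_pow_sum_one: "mat_pow_sum k (1\<^sub>m 1 :: 'a::field mat) = 1\<^sub>m k"
proof (induction k)
  case (Suc k)
  then show ?case using four_block_one_mat[of 1 k] by simp
qed (auto intro!: eq_matI)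

context
  fixes m n :: nat and M :: "'k::field grid_rep" and i j :: vertex and S :: "vertex set"
  assumes rep: "is_grid_rep m n M" and ij: "grid_path m n i j"
    and S: "i \<in> S" "j \<in> S" "S \<subseteq> rect i j"
begin

lemma summand_pow_rect_le_rank:
  assumes "summand_pow m n S r (interval_rep (rect i j)) M"
  shows "r \<le> mat_rank (path_map M i j)"
proof -
  let ?V = "interval_rep (rect i j) :: 'k grid_rep"
  obtain f g where fg: "\<And>s. s \<in> S \<Longrightarrow> f s \<in> carrier_mat (rdim M s) (r * rdim ?V s) \<and>
                    g s \<in> carrier_mat (r * rdim ?V s) (rdim M s) \<and> g s * f s = 1\<^sub>m (r * rdim ?V s)"
    and nat: "\<And>s t. s \<in> S \<Longrightarrow> t \<in> S \<Longrightarrow> grid_path m n s t \<Longrightarrow>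
                    g t * path_map M s t = mat_pow_sum r (path_map ?V s t) * g s"
    using assms unfolding summand_pow_def by blast
  have ij_rect: "i \<in> rect i j" "j \<in> rect i j" using S by auto
  have "rdim ?V i = 1" "rdim ?V j = 1" using ij_rect by (auto simp: rdim_interval_rep)
  then have fi: "f i \<in> carrier_mat (rdim M i) r" and gi: "g i \<in> carrier_mat r (rdim M i)"
    and gfi: "g i * f i = 1\<^sub>m r" and gj: "g j \<in> carrier_mat r (rdim M j)"
    using fg[OF S(1)] fg[OF S(2)] by simp_all
  have A: "path_map M i j \<in> carrier_mat (rdim M j) (rdim M i)" by (rule path_map_carrier[OF rep ij])
  have "g j * path_map M i j = g i"
    using nat[OF S(1,2) ij] path_map_interval_rep[OF rect_is_interval[OF ij] ij ij_rect, where 'k = 'k] gi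
    by (simp add: mat_pow_sum_one[simplified])
  then have "g j * (path_map M i j * f i) = 1\<^sub>m r"
    using assoc_mult_mat[OF gj A fi] gfi by simp
  then show ?thesis by (rule mat_rank_ge_split[OF A fi gj])
qed

text \<open>Split \<open>M(i\<rightarrow>j)\<close> as \<open>C M(i\<rightarrow>j) B = 1\<close>; then \<open>f s = M(i\<rightarrow>s) B\<close> and \<open>g s = C M(s\<rightarrow>j)\<close>
  embed \<open>rank M(i\<rightarrow>j)\<close> copies of the interval representation of the rectangle.\<close>
lemma summand_pow_rect_rank:
  "summand_pow m n S (mat_rank (path_map M i j)) (interval_rep (rect i j)) M"
proof -
  let ?V = "interval_rep (rect i j) :: 'k grid_rep"
  let ?r = "mat_rank (path_map M i j)"
  let ?P = "path_map M"
  have cP: "?P s t \<in> carrier_mat (rdim M t) (rdim M s)" if "grid_path m n s t" for s t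
    by (rule path_map_carrier[OF rep that])
  obtain B C where B: "B \<in> carrier_mat (rdim M i) ?r" and C: "C \<in> carrier_mat ?r (rdim M j)"
    and CAB: "C * (?P i j * B) = 1\<^sub>m ?r" using mat_rank_split[OF cP[OF ij]] by blast
  define f where "f s = ?P i s * B" for s
  define g where "g s = C * ?P s j" for s
  have path_i: "grid_path m n i s" and path_j: "grid_path m n s j" and rdim_V: "rdim ?V s = 1"
    if "s \<in> S" for s
    using grid_path_through_rect[OF ij, of s] that S(3) by (auto simp: rdim_interval_rep)
  have f: "f s \<in> carrier_mat (rdim M s) ?r" and g: "g s \<in> carrier_mat ?r (rdim M s)"
    if "s \<in> S" for s
    using cP[OF path_i[OF that]] cP[OF path_j[OF that]] B C by (auto simp: f_def g_def)
  have gf: "g s * f s = 1\<^sub>m ?r" if "s \<in> S" for s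
  proof -
    have "g s * f s = C * ((?P s j * ?P i s) * B)"
      using assoc_mult_mat[OF C cP[OF path_j[OF that]] mult_carrier_mat[OF cP[OF path_i[OF that]] B]]
        assoc_mult_mat[OF cP[OF path_j[OF that]] cP[OF path_i[OF that]] B]
      by (simp add: f_def g_def)
    also have "\<dots> = 1\<^sub>m ?r" using path_map_comp[OF rep path_i[OF that] path_j[OF that]] CAB by simp
    finally show ?thesis .
  qed
  have natural: "?P s t * f s = f t * mat_pow_sum ?r (path_map ?V s t) \<and>
             g t * ?P s t = mat_pow_sum ?r (path_map ?V s t) * g s"
    if s: "s \<in> S" and t: "t \<in> S" and st: "grid_path m n s t" for s t
  proof -
    have "path_map ?V s t = 1\<^sub>m 1"
      using path_map_interval_rep[OF rect_is_interval[OF ij] st, where 'k = 'k] s t S(3) by blast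
    moreover have "?P s t * f s = f t"
      using assoc_mult_mat[OF cP[OF st] cP[OF path_i[OF s]] B, symmetric]
        path_map_comp[OF rep path_i[OF s] st] by (simp add: f_def)
    moreover have "g t * ?P s t = g s"
      using assoc_mult_mat[OF C cP[OF path_j[OF t]] cP[OF st]]
        path_map_comp[OF rep st path_j[OF t]] by (simp add: g_def)
    ultimately show ?thesis using f[OF t] g[OF s] by (simp add: mat_pow_sum_one[simplified])
  qed
  show ?thesis unfolding summand_pow_def
    using f g gf natural rdim_V by (intro exI[of _ f] exI[of _ g]) auto
qed

lemma summand_mult_rect: "summand_mult m n S (interval_rep (rect i j)) M = mat_rank (path_map M i j)"
  unfolding summand_mult_def
  using summand_pow_rect_rank summand_pow_rect_le_rank by (rule Greatest_equality)

end

lemma compressed_mult_rect: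
  assumes "is_grid_rep m n M" "grid_path m n i j"
  shows "compressed_mult m n k M (rect i j) = mat_rank (path_map M i j)"
  unfolding compressed_mult_def
  using summand_mult_rect[OF assms ess_vertices_rect[OF assms(2)]] .

theorem mainTheorem15:
  fixes M :: "'k::field grid_rep" and m n :: nat and k :: ess_kind and i j :: vertex
  assumes "1 \<le> m" and "1 \<le> n"
    and "is_grid_rep m n M"
    and "grid_path m n i j"
  shows "(\<Sum>I \<in> intervals m n. tilde_mult m n k M I * int (mat_rank (path_map (interval_rep I :: 'k grid_rep) i j)))
         = int (mat_rank (path_map M i j))"
proof -
  let ?R = "rect i j"
  have "(\<Sum>I \<in> intervals m n. tilde_mult m n k M I * int (mat_rank (path_map (interval_rep I :: 'k grid_rep) i j)))
      = (\<Sum>I \<in> intervals m n. if ?R \<subseteq> I then tilde_mult m n k M I else 0)"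
    using mat_rank_path_map_interval_rep[OF _ assms(4), where 'k = 'k]
      rect_subset_interval_iff[OF _ assms(4)]
    by (intro sum.cong) (auto simp: intervals_def)
  also have "\<dots> = (\<Sum>I \<in> {I \<in> intervals m n. ?R \<subseteq> I}. tilde_mult m n k M I)"
    by (simp add: sum.inter_filter finite_intervals)
  also have "\<dots> = int (compressed_mult m n k M ?R)"
    unfolding tilde_mult_def
    by (rule mobius_inversion_above) (use rect_is_interval[OF assms(4)] in \<open>simp add: intervals_def\<close>)
  also have "\<dots> = int (mat_rank (path_map M i j))"
    by (simp add: compressed_mult_rect[OF assms(3,4)])
  finally show ?thesis .
qed

end
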